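(* Let $X$ be any one of the sequences $F,L,J,j,P,Q$. For integers $a,b,c,d,e$ put $$\Delta=X_{d-a}X_{e-b}-X_{e-a}X_{d-b},\quad \Delta_1=X_{d-c}X_{e-b}-X_{e-c}X_{d-b},\quad \Delta_2=X_{d-a}X_{e-c}-X_{e-a}X_{d-c}.$$ Let $k,m$ be integers. Provided every denominator appearing below is nonzero and, when $k<0$, the base of every power appearing is nonzero: $$\sum_{r=0}^k\left(\frac{\Delta}{\Delta_1}\right)^rX_{m-k(a-c)-b+c+(a-c)r}=\frac{\Delta}{\Delta_2}\left(\frac{\Delta}{\Delta_1}\right)^kX_m-\frac{\Delta_1}{\Delta_2}X_{m-(k+1)(a-c)},$$ $$\sum_{r=0}^k\left(\frac{\Delta}{\Delta_2}\right)^rX_{m-k(b-c)-a+c+(b-c)r}=\frac{\Delta}{\Delta_1}\left(\frac{\Delta}{\Delta_2}\right)^kX_m-\frac{\Delta_2}{\Delta_1}X_{m-(k+1)(b-c)},$$ $$\sum_{r=0}^k\left(\frac{-\Delta_2}{\Delta_1}\right)^rX_{m-k(a-b)+b-c+(a-b)r}=\frac{\Delta_2}{\Delta}\left(\frac{-\Delta_2}{\Delta_1}\right)^kX_m+\frac{\Delta_1}{\Delta}X_{m-(k+1)(a-b)}.$$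
   Context: All sequences are indexed by $n\in\mathbb Z$. Fibonacci numbers $F_n$ and Lucas numbers $L_n$: $F_n=F_{n-1}+F_{n-2}$, $L_n=L_{n-1}+L_{n-2}$ for all $n\in\mathbb Z$, with $F_0=0,F_1=1,L_0=2,L_1=1$ (so $F_{-n}=(-1)^{n-1}F_n$, $L_{-n}=(-1)^nL_n$). Jacobsthal numbers $J_n$ and Jacobsthal–Lucas numbers $j_n$: $J_n=J_{n-1}+2J_{n-2}$, $j_n=j_{n-1}+2j_{n-2}$ for all $n\in\mathbb Z$, with $J_0=0,J_1=1,j_0=2,j_1=1$ (so $J_{-n}=(-1)^{n-1}2^{-n}J_n$, $j_{-n}=(-1)^n2^{-n}j_n$, rational for negative index). Pell numbers $P_n$ and Pell–Lucas numbers $Q_n$: $P_n=2P_{n-1}+P_{n-2}$, $Q_n=2Q_{n-1}+Q_{n-2}$ for all $n\in\mathbb Z$, with $P_0=0,P_1=1,Q_0=2,Q_1=2$ (so $P_{-n}=(-1)^{n-1}P_n$, $Q_{-n}=(-1)^nQ_n$). Summation convention: for an integer $k<0$, $\sum_{r=0}^k f_r$ means $-\sum_{r=k+1}^{-1} f_r$ (in particular it equals $0$ when $k=-1$). *)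

theory Defs
  imports Complex_Main
begin

fun hor_pos :: "real \<Rightarrow> real \<Rightarrow> real \<Rightarrow> real \<Rightarrow> nat \<Rightarrow> real" where
  "hor_pos p q w0 w1 0 = w0"
| "hor_pos p q w0 w1 (Suc 0) = w1"
| "hor_pos p q w0 w1 (Suc (Suc n)) = p * hor_pos p q w0 w1 (Suc n) + q * hor_pos p q w0 w1 n"

text \<open>hor_neg p q w0 w1 n is the value at index -n (backward recursion
  W(i-2) = (W i - p W(i-1)) / q).\<close>
fun hor_neg :: "real \<Rightarrow> real \<Rightarrow> real \<Rightarrow> real \<Rightarrow> nat \<Rightarrow> real" where
  "hor_neg p q w0 w1 0 = w0"
| "hor_neg p q w0 w1 (Suc 0) = (w1 - p * w0) / q"
| "hor_neg p q w0 w1 (Suc (Suc n)) =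
     (hor_neg p q w0 w1 n - p * hor_neg p q w0 w1 (Suc n)) / q"

definition hor :: "real \<Rightarrow> real \<Rightarrow> real \<Rightarrow> real \<Rightarrow> int \<Rightarrow> real" where
  "hor p q w0 w1 n = (if n \<ge> 0 then hor_pos p q w0 w1 (nat n) else hor_neg p q w0 w1 (nat (- n)))"

definition Fib :: "int \<Rightarrow> real" where "Fib = hor 1 1 0 1"
definition Luc :: "int \<Rightarrow> real" where "Luc = hor 1 1 2 1"
definition Jac :: "int \<Rightarrow> real" where "Jac = hor 1 2 0 1"
definition JacL :: "int \<Rightarrow> real" where "JacL = hor 1 2 2 1"
definition Pell :: "int \<Rightarrow> real" where "Pell = hor 2 1 0 1"
definition PellL :: "int \<Rightarrow> real" where "PellL = hor 2 1 2 2"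

definition isum :: "(int \<Rightarrow> real) \<Rightarrow> int \<Rightarrow> real" where
  "isum f k = (if k \<ge> 0 then (\<Sum>r\<in>{0..k}. f r) else - (\<Sum>r\<in>{k+1..-1}. f r))"

end

theory Submission
  imports Defs
begin

text \<open>Every sequence in question solves a recurrence \<open>W (n+2) = p W (n+1) + q W n\<close> with \<open>q \<noteq> 0\<close>,
  whose solution space is two-dimensional. The sequence
  \<open>n \<mapsto> \<Delta> X (n-c) - \<Delta>\<^sub>1 X (n-a) - \<Delta>\<^sub>2 X (n-b)\<close> solves it and, by expanding the
  determinants, vanishes at \<open>n = d\<close> and \<open>n = e\<close>; as \<open>\<Delta> \<noteq> 0\<close> forces the evaluations at \<open>d\<close>
  and \<open>e\<close> to be independent, it vanishes identically. Each of the three sums is then a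
  telescoping sum of the weighted terms of this three-term relation.\<close>

definition solves_rec :: "real \<Rightarrow> real \<Rightarrow> (int \<Rightarrow> real) \<Rightarrow> bool" where
  "solves_rec p q Y \<longleftrightarrow> (\<forall>n. Y (n + 2) = p * Y (n + 1) + q * Y n)"

lemma solves_rec_hor:
  assumes "q \<noteq> 0"
  shows "solves_rec p q (hor p q w0 w1)"
  unfolding solves_rec_def
proof
  fix n :: int
  show "hor p q w0 w1 (n + 2) = p * hor p q w0 w1 (n + 1) + q * hor p q w0 w1 n"
  proof (cases "n \<ge> 0")
    case True
    then obtain j where "n = int j" by (metis nonneg_int_cases)
    moreover have "nat (int j + 2) = Suc (Suc j)" "nat (int j + 1) = Suc j" by auto
    ultimately show ?thesis by (simp add: hor_def)
  next
    case False
    consider "n = -1" | "n = -2" | "n \<le> -3" using False by linarith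
    then show ?thesis
    proof cases
      case 3
      then have "nat (- n) = Suc (Suc (nat (- n - 2)))" "nat (- 1 - n) = Suc (nat (- n - 2))"
        by auto
      with 3 assms show ?thesis by (simp add: hor_def field_simps)
    qed (use assms in \<open>simp_all add: hor_def numeral_2_eq_2 field_simps\<close>)
  qed
qed

lemma solves_rec_shift:
  assumes "solves_rec p q Y"
  shows "solves_rec p q (\<lambda>n. Y (n - s))"
  unfolding solves_rec_def
proof
  fix n :: int
  have "Y (n - s + 2) = p * Y (n - s + 1) + q * Y (n - s)"
    using assms unfolding solves_rec_def by blast
  then show "Y (n + 2 - s) = p * Y (n + 1 - s) + q * Y (n - s)"
    by (simp add: algebra_simps)
qed

lemma solves_rec_eq_0:
  assumes rec: "solves_rec p q Y" and "q \<noteq> 0" and "Y 0 = 0" and "Y 1 = 0"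
  shows "Y n = 0"
proof -
  have step: "Y (n + 2) = p * Y (n + 1) + q * Y n" for n
    using rec unfolding solves_rec_def by blast
  have up: "Y (int j) = 0 \<and> Y (int j + 1) = 0" for j
  proof (induction j)
    case (Suc j)
    then show ?case using step[of "int j"] by (simp add: algebra_simps)
  qed (use assms in simp)
  have down: "Y (- int j) = 0 \<and> Y (- int j + 1) = 0" for j
  proof (induction j)
    case (Suc j)
    then have "q * Y (- 1 - int j) = 0" using step[of "- 1 - int j"] by (simp add: algebra_simps)
    with Suc \<open>q \<noteq> 0\<close> show ?case by (simp add: algebra_simps)
  qed (use assms in simp)
  show ?thesis
    using up[of "nat n"] down[of "nat (- n)"] by (cases "n \<ge> 0") simp_all
qed

lemma solves_rec_basis:
  assumes rec: "solves_rec p q Y" and "q \<noteq> 0"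
  shows "Y n = Y 0 * hor p q 1 0 n + Y 1 * hor p q 0 1 n"
proof -
  define Z where "Z n = Y n - (Y 0 * hor p q 1 0 n + Y 1 * hor p q 0 1 n)" for n
  have "solves_rec p q Z"
    using rec solves_rec_hor[OF \<open>q \<noteq> 0\<close>] unfolding solves_rec_def Z_def by (simp add: algebra_simps)
  then have "Z n = 0"
    by (rule solves_rec_eq_0[OF _ \<open>q \<noteq> 0\<close>]) (simp_all add: Z_def hor_def)
  then show ?thesis by (simp add: Z_def)
qed

lemma solves_rec_casoratian:
  assumes "solves_rec p q Y" and "solves_rec p q Z" and "q \<noteq> 0"
  shows "Y d * Z e - Y e * Z d
    = (hor p q 1 0 d * hor p q 0 1 e - hor p q 0 1 d * hor p q 1 0 e) * (Y 0 * Z 1 - Y 1 * Z 0)"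
proof -
  note basis_Y = solves_rec_basis[OF assms(1,3)] and basis_Z = solves_rec_basis[OF assms(2,3)]
  have "Y d * Z e - Y e * Z d
      = (Y 0 * hor p q 1 0 d + Y 1 * hor p q 0 1 d) * (Z 0 * hor p q 1 0 e + Z 1 * hor p q 0 1 e)
      - (Y 0 * hor p q 1 0 e + Y 1 * hor p q 0 1 e) * (Z 0 * hor p q 1 0 d + Z 1 * hor p q 0 1 d)"
    by (simp only: basis_Y[of d] basis_Y[of e] basis_Z[of d] basis_Z[of e])
  then show ?thesis by (simp add: algebra_simps)
qed

lemma solves_rec_eq_0_if_vanishes_twice:
  assumes rec: "solves_rec p q Y" and "q \<noteq> 0" and "Y d = 0" and "Y e = 0"
    and W: "hor p q 1 0 d * hor p q 0 1 e - hor p q 0 1 d * hor p q 1 0 e \<noteq> 0"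
  shows "Y n = 0"
proof -
  note basis = solves_rec_basis[OF rec \<open>q \<noteq> 0\<close>]
  have "Y 0 * (hor p q 1 0 d * hor p q 0 1 e - hor p q 0 1 d * hor p q 1 0 e)
      = hor p q 0 1 e * Y d - hor p q 0 1 d * Y e"
   and "Y 1 * (hor p q 1 0 d * hor p q 0 1 e - hor p q 0 1 d * hor p q 1 0 e)
      = hor p q 1 0 d * Y e - hor p q 1 0 e * Y d"
    by (simp_all only: basis[of d] basis[of e]) (simp_all add: algebra_simps)
  with W \<open>Y d = 0\<close> \<open>Y e = 0\<close> have "Y 0 = 0" "Y 1 = 0" by simp_all
  then show ?thesis by (rule solves_rec_eq_0[OF rec \<open>q \<noteq> 0\<close>])
qed

lemma three_term_relation:
  fixes X :: "int \<Rightarrow> real" and a b c d e n :: int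
  assumes rec: "solves_rec p q X" and "q \<noteq> 0"
  defines "D \<equiv> X (d - a) * X (e - b) - X (e - a) * X (d - b)"
      and "D1 \<equiv> X (d - c) * X (e - b) - X (e - c) * X (d - b)"
      and "D2 \<equiv> X (d - a) * X (e - c) - X (e - a) * X (d - c)"
  assumes "D \<noteq> 0"
  shows "D * X (n - c) = D1 * X (n - a) + D2 * X (n - b)"
proof -
  define Y where "Y n = D * X (n - c) - D1 * X (n - a) - D2 * X (n - b)" for n
  have "solves_rec p q Y"
    using solves_rec_shift[OF rec, of a] solves_rec_shift[OF rec, of b] solves_rec_shift[OF rec, of c]
    unfolding solves_rec_def Y_def by (simp add: algebra_simps)
  moreover have "Y d = 0" "Y e = 0"
    unfolding Y_def D_def D1_def D2_def by (simp_all add: algebra_simps)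
  moreover have "hor p q 1 0 d * hor p q 0 1 e - hor p q 0 1 d * hor p q 1 0 e \<noteq> 0"
    using \<open>D \<noteq> 0\<close> solves_rec_casoratian[OF solves_rec_shift[OF rec] solves_rec_shift[OF rec] \<open>q \<noteq> 0\<close>]
    unfolding D_def by auto
  ultimately have "Y n = 0" by (intro solves_rec_eq_0_if_vanishes_twice[OF _ \<open>q \<noteq> 0\<close>])
  then show ?thesis by (simp add: Y_def)
qed

lemma isum_minus_one [simp]: "isum f (- 1) = 0"
  by (simp add: isum_def)

lemma isum_plus_one: "isum f (k + 1) = isum f k + f (k + 1)"
proof (cases "k \<ge> 0")
  case True
  then have "{0..k + 1} = insert (k + 1) {0..k}" by auto
  with True show ?thesis by (simp add: isum_def)
next
  case False
  then have "k = - 1 \<or> {k + 1..- 1} = insert (k + 1) {k + 1 + 1..- 1}" by auto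
  with False show ?thesis by (auto simp: isum_def)
qed

lemma isum_telescope: "isum (\<lambda>r. G (r + 1) - G r) k = G (k + 1) - (G 0 :: real)"
proof (induction k rule: int_induct[where k = "- 1"])
  case (step2 i)
  then show ?case using isum_plus_one[of _ "i - 1"] by simp
qed (simp_all add: isum_plus_one)

lemma isum_weighted_three_term:
  fixes A B C :: real and W Y :: "int \<Rightarrow> real"
  assumes "A \<noteq> 0" and "B \<noteq> 0" and "C \<noteq> 0"
    and rel: "\<And>r. A * W r = B * W (r - 1) + C * Y r"
  shows "isum (\<lambda>r. (A / B) powi r * Y r) k = A / C * (A / B) powi k * W k - B / C * W (- 1)"
proof -
  define G where "G r = B / C * (A / B) powi r * W (r - 1)" for r
  have "(A / B) powi r * Y r = G (r + 1) - G r" for r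
  proof -
    have "(A / B) powi (r + 1) = (A / B) powi r * (A / B)"
      using \<open>A \<noteq> 0\<close> \<open>B \<noteq> 0\<close> by (simp add: power_int_add_1)
    then have "G (r + 1) - G r = (A / B) powi r / C * (A * W r - B * W (r - 1))"
      using \<open>B \<noteq> 0\<close> \<open>C \<noteq> 0\<close> unfolding G_def by (simp add: field_simps)
    also have "\<dots> = (A / B) powi r * Y r"
      using rel[of r] \<open>C \<noteq> 0\<close> by simp
    finally show ?thesis by simp
  qed
  then have "isum (\<lambda>r. (A / B) powi r * Y r) k = G (k + 1) - G 0"
    using isum_telescope[of G k] by simp
  then show ?thesis
    using \<open>A \<noteq> 0\<close> \<open>B \<noteq> 0\<close> unfolding G_def by (simp add: power_int_add_1)
qed

lemma isum_three_term_progression: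
  fixes A B C :: real and X :: "int \<Rightarrow> real" and h t k m :: int
  assumes "A \<noteq> 0" and "B \<noteq> 0" and "C \<noteq> 0"
    and rel: "\<And>n. A * X n = B * X (n - h) + C * X (n + t)"
  shows "isum (\<lambda>r. (A / B) powi r * X (m - k*h + t + h*r)) k
    = A / C * (A / B) powi k * X m - B / C * X (m - (k + 1)*h)"
proof -
  have "A * X (m - (k - r)*h) = B * X (m - (k - (r - 1))*h) + C * X (m - k*h + t + h*r)" for r
    using rel[of "m - (k - r)*h"] by (simp add: algebra_simps)
  from isum_weighted_three_term[where W = "\<lambda>r. X (m - (k - r)*h)" and Y = "\<lambda>r. X (m - k*h + t + h*r)",
      OF assms(1-3) this]
  show ?thesis by (simp add: algebra_simps)
qed

lemma solves_rec_if_named_sequence: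
  assumes "X \<in> {Fib, Luc, Jac, JacL, Pell, PellL}"
  obtains p q where "q \<noteq> 0" and "solves_rec p q X"
  using assms solves_rec_hor[of 1 1] solves_rec_hor[of 2 1] solves_rec_hor[of 1 2]
  unfolding Fib_def Luc_def Jac_def JacL_def Pell_def PellL_def by fastforce

theorem theorem5:
  fixes X :: "int \<Rightarrow> real" and a b c d e k m :: int
  assumes "X \<in> {Fib, Luc, Jac, JacL, Pell, PellL}"
  defines "D \<equiv> X (d - a) * X (e - b) - X (e - a) * X (d - b)"
      and "D1 \<equiv> X (d - c) * X (e - b) - X (e - c) * X (d - b)"
      and "D2 \<equiv> X (d - a) * X (e - c) - X (e - a) * X (d - c)"
  assumes "D \<noteq> 0" and "D1 \<noteq> 0" and "D2 \<noteq> 0"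
  shows "isum (\<lambda>r. (D / D1) powi r * X (m - k*(a - c) - b + c + (a - c)*r)) k
           = D / D2 * (D / D1) powi k * X m - D1 / D2 * X (m - (k + 1)*(a - c))
       \<and> isum (\<lambda>r. (D / D2) powi r * X (m - k*(b - c) - a + c + (b - c)*r)) k
           = D / D1 * (D / D2) powi k * X m - D2 / D1 * X (m - (k + 1)*(b - c))
       \<and> isum (\<lambda>r. (- D2 / D1) powi r * X (m - k*(a - b) + b - c + (a - b)*r)) k
           = D2 / D * (- D2 / D1) powi k * X m + D1 / D * X (m - (k + 1)*(a - b))"
proof -
  obtain p q where "q \<noteq> 0" and rec: "solves_rec p q X"
    using solves_rec_if_named_sequence[OF assms(1)] .
  from three_term_relation[OF rec \<open>q \<noteq> 0\<close> \<open>D \<noteq> 0\<close>[unfolded D_def]]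
  have rel: "D * X (n - c) = D1 * X (n - a) + D2 * X (n - b)" for n
    unfolding D_def D1_def D2_def .
  have "D * X n = D1 * X (n - (a - c)) + D2 * X (n + (c - b))" for n
    using rel[of "n + c"] by (simp add: algebra_simps)
  from isum_three_term_progression[OF \<open>D \<noteq> 0\<close> \<open>D1 \<noteq> 0\<close> \<open>D2 \<noteq> 0\<close> this, of m k]
  have S1: "isum (\<lambda>r. (D / D1) powi r * X (m - k*(a - c) - b + c + (a - c)*r)) k
           = D / D2 * (D / D1) powi k * X m - D1 / D2 * X (m - (k + 1)*(a - c))"
    by (simp add: algebra_simps)
  have "D * X n = D2 * X (n - (b - c)) + D1 * X (n + (c - a))" for n
    using rel[of "n + c"] by (simp add: algebra_simps)
  from isum_three_term_progression[OF \<open>D \<noteq> 0\<close> \<open>D2 \<noteq> 0\<close> \<open>D1 \<noteq> 0\<close> this, of m k]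
  have S2: "isum (\<lambda>r. (D / D2) powi r * X (m - k*(b - c) - a + c + (b - c)*r)) k
           = D / D1 * (D / D2) powi k * X m - D2 / D1 * X (m - (k + 1)*(b - c))"
    by (simp add: algebra_simps)
  have "- D2 * X n = D1 * X (n - (a - b)) + - D * X (n + (b - c))" for n
    using rel[of "n + b"] by (simp add: algebra_simps)
  from isum_three_term_progression[OF _ \<open>D1 \<noteq> 0\<close> _ this, of m k] \<open>D \<noteq> 0\<close> \<open>D2 \<noteq> 0\<close>
  have S3: "isum (\<lambda>r. (- D2 / D1) powi r * X (m - k*(a - b) + b - c + (a - b)*r)) k
           = D2 / D * (- D2 / D1) powi k * X m + D1 / D * X (m - (k + 1)*(a - b))"
    by (simp add: algebra_simps)
  show ?thesis using S1 S2 S3 by blast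
qed

end
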